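(* Let $\alpha,\beta,\mu$ be real parameters with $0<\alpha\leq 1$, $\beta>0$, $0<\mu\leq 1$. Define $$T(x)=\frac{(1-\beta)x^2+(1-\alpha)x+\beta}{(\mu-\beta)x^2+x+\beta-\mu+1}.$$ Then $T$ is well defined on $[0,1]$ and maps $[0,1]$ into $[0,1]$. *)

theory Defs
  imports Complex_Main
begin

definition T_map :: "real \<Rightarrow> real \<Rightarrow> real \<Rightarrow> real \<Rightarrow> real" where
  "T_map \<alpha> \<beta> \<mu> x =
     ((1 - \<beta>) * x^2 + (1 - \<alpha>) * x + \<beta>) / ((\<mu> - \<beta>) * x^2 + x + \<beta> - \<mu> + 1)"

end

theory Submission
  imports Defs
begin

text \<open>On \<open>[0,1]\<close> the denominator factors as \<open>(1 + x)((1 - x)(\<beta> - \<mu> + 1) + x)\<close>,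
  a product of positive factors. Writing \<open>N\<close> for the numerator, one has
  \<open>N = \<beta>(1 - x\<^sup>2) + x\<^sup>2 + (1 - \<alpha>)x\<close> and \<open>D - N = (1 - \<mu>)(1 - x\<^sup>2) + \<alpha>x\<close>,
  so \<open>0 \<le> N \<le> D\<close> and hence \<open>N / D \<in> [0,1]\<close>.\<close>

lemma T_denominator_pos:
  fixes \<beta> \<mu> x :: real
  assumes "0 < \<beta> - \<mu> + 1" and x: "x \<in> {0..1}"
  shows "(\<mu> - \<beta>) * x^2 + x + \<beta> - \<mu> + 1 > 0"
proof -
  have factor: "(\<mu> - \<beta>) * x^2 + x + \<beta> - \<mu> + 1 = (1 + x) * ((1 - x) * (\<beta> - \<mu> + 1) + x)"
    by (simp add: algebra_simps power2_eq_square)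
  have "(1 - x) * (\<beta> - \<mu> + 1) \<ge> 0"
    using x assms(1) by simp
  moreover have "(1 - x) * (\<beta> - \<mu> + 1) > 0 \<or> x > 0"
    using x assms(1) by (cases "x = 0") auto
  ultimately have "(1 - x) * (\<beta> - \<mu> + 1) + x > 0"
    using x by auto
  with x show ?thesis
    unfolding factor by simp
qed

lemma T_numerator_nonneg:
  fixes \<alpha> \<beta> x :: real
  assumes "\<alpha> \<le> 1" "0 \<le> \<beta>" and x: "x \<in> {0..1}"
  shows "(1 - \<beta>) * x^2 + (1 - \<alpha>) * x + \<beta> \<ge> 0"
proof -
  have regrouped: "(1 - \<beta>) * x^2 + (1 - \<alpha>) * x + \<beta> = \<beta> * (1 - x^2) + x^2 + (1 - \<alpha>) * x"
    by (simp add: algebra_simps)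
  have "x^2 \<le> 1"
    using x by (simp add: power_le_one)
  with assms show ?thesis
    unfolding regrouped by simp
qed

lemma T_numerator_le_denominator:
  fixes \<alpha> \<beta> \<mu> x :: real
  assumes "0 \<le> \<alpha>" "\<mu> \<le> 1" and x: "x \<in> {0..1}"
  shows "(1 - \<beta>) * x^2 + (1 - \<alpha>) * x + \<beta> \<le> (\<mu> - \<beta>) * x^2 + x + \<beta> - \<mu> + 1"
proof -
  have regrouped: "(\<mu> - \<beta>) * x^2 + x + \<beta> - \<mu> + 1 - ((1 - \<beta>) * x^2 + (1 - \<alpha>) * x + \<beta>)
        = (1 - \<mu>) * (1 - x^2) + \<alpha> * x"
    by (simp add: algebra_simps)
  have "x^2 \<le> 1"
    using x by (simp add: power_le_one)
  with assms x have "(1 - \<mu>) * (1 - x^2) + \<alpha> * x \<ge> 0"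
    by simp
  then show ?thesis
    unfolding regrouped[symmetric] by simp
qed

lemma T_map_mem_unit_interval:
  fixes \<alpha> \<beta> \<mu> x :: real
  assumes "0 \<le> \<alpha>" "\<alpha> \<le> 1" "0 < \<beta>" "\<mu> \<le> 1" and x: "x \<in> {0..1}"
  shows "T_map \<alpha> \<beta> \<mu> x \<in> {0..1}"
proof -
  have "(\<mu> - \<beta>) * x^2 + x + \<beta> - \<mu> + 1 > 0"
    using T_denominator_pos assms by simp
  with T_numerator_nonneg[of \<alpha> \<beta> x] T_numerator_le_denominator[of \<alpha> \<mu> x \<beta>] assms
  show ?thesis
    unfolding T_map_def by simp
qed

theorem proposition3:
  fixes \<alpha> \<beta> \<mu> :: real
  assumes "0 < \<alpha>" "\<alpha> \<le> 1" "0 < \<beta>" "0 < \<mu>" "\<mu> \<le> 1"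
  shows "(\<forall>x\<in>{0..1}. (\<mu> - \<beta>) * x^2 + x + \<beta> - \<mu> + 1 \<noteq> 0)
       \<and> (\<forall>x\<in>{0..1}. T_map \<alpha> \<beta> \<mu> x \<in> {0..1})"
  using T_denominator_pos[of \<beta> \<mu>] T_map_mem_unit_interval[of \<alpha> \<beta> \<mu>] assms
  by force

end
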